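(* Let $\Gamma$ be the triangle graph (three vertices, three edges $e_1,e_2,e_3$, pairwise joining the vertices) with constant magnetic field, i.e. vertex weight $\omega\equiv 1$ on each vertex, so that its $\mathbf{V}$-polynomial is $$x_1^3+(t_{e_1}+t_{e_2}+t_{e_3})x_2x_1+(t_{e_1}t_{e_2}+t_{e_2}t_{e_3}+t_{e_1}t_{e_3}+t_{e_1}t_{e_2}t_{e_3})x_3$$ in the variables $x_1,x_2,x_3,t_{e_1},t_{e_2},t_{e_3}$. Then the affine hypersurface in $\mathbb{A}^6$ defined by the vanishing of this polynomial is not polynomially countable.
   Context: For a graph $\Gamma$ with vertex weight $\omega:V(\Gamma)\to S$, the $\mathbf{V}$-polynomial is $\mathbf{V}_\Gamma(t,x)=\sum_{A\subseteq E(\Gamma)}\prod_{j}x_{s_j}\prod_{e\in A}t_e$, where the product over $j$ runs over the connected components of the spanning subgraph with edge set $A$ and $s_j$ is the sum of the weights of the vertices of the $j$-th component. A hypersurface defined by a polynomial with integer coefficients is polynomially countable if for every prime $p$ and every power $q=p^r$, the number $N(q)$ of its $\mathbb{F}_q$-points (solutions in $\mathbb{F}_q$ of the reduced equation) is given by a polynomial in $q$ with integer coefficients. *)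

theory Defs
  imports "HOL-Algebra.Ring" "HOL-Computational_Algebra.Polynomial"
begin

definition V_triangle :: "('a, 'b) ring_scheme \<Rightarrow> 'a \<Rightarrow> 'a \<Rightarrow> 'a \<Rightarrow> 'a \<Rightarrow> 'a \<Rightarrow> 'a \<Rightarrow> 'a" where
  "V_triangle R x1 x2 x3 t1 t2 t3 =
     (x1 [^]\<^bsub>R\<^esub> (3::nat))
     \<oplus>\<^bsub>R\<^esub> ((t1 \<oplus>\<^bsub>R\<^esub> t2 \<oplus>\<^bsub>R\<^esub> t3) \<otimes>\<^bsub>R\<^esub> x2 \<otimes>\<^bsub>R\<^esub> x1)
     \<oplus>\<^bsub>R\<^esub> (((t1 \<otimes>\<^bsub>R\<^esub> t2) \<oplus>\<^bsub>R\<^esub> (t2 \<otimes>\<^bsub>R\<^esub> t3) \<oplus>\<^bsub>R\<^esub> (t1 \<otimes>\<^bsub>R\<^esub> t3)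
            \<oplus>\<^bsub>R\<^esub> (t1 \<otimes>\<^bsub>R\<^esub> t2 \<otimes>\<^bsub>R\<^esub> t3)) \<otimes>\<^bsub>R\<^esub> x3)"

definition V_triangle_points :: "('a, 'b) ring_scheme \<Rightarrow> nat" where
  "V_triangle_points R = card {(x1, x2, x3, t1, t2, t3).
      x1 \<in> carrier R \<and> x2 \<in> carrier R \<and> x3 \<in> carrier R \<and>
      t1 \<in> carrier R \<and> t2 \<in> carrier R \<and> t3 \<in> carrier R \<and>
      V_triangle R x1 x2 x3 t1 t2 t3 = \<zero>\<^bsub>R\<^esub>}"

text \<open>Every finite field is isomorphic to one
  with carrier a set of naturals, so quantifying over fields of type nat ring covers
  all finite fields F_q (q any prime power).\<close>
definition V_triangle_polynomially_countable :: bool where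
  "V_triangle_polynomially_countable \<longleftrightarrow>
     (\<exists>f :: int poly. \<forall>R :: nat ring. field R \<and> finite (carrier R) \<longrightarrow>
        int (V_triangle_points R) = poly f (int (card (carrier R))))"

end

theory Submission
  imports Defs "HOL-Number_Theory.Cong"
begin

text \<open>Fibre the hypersurface over the edge variables: for fixed t the equation is
  x1^3 + s x2 x1 + c x3 = 0 with s = t1 + t2 + t3 and c = t1 t2 + t2 t3 + t1 t3 + t1 t2 t3.
  The fibre has q^2 points, except when c = 0 and s \<noteq> 0, where the equation factors as
  x1 (x1^2 + s x2) = 0 and the fibre has q^2 + (q - 1) q points. Hence
  N(q) = q^5 + B(q) (q - 1) q with B(q) the number of such t. Counting gives
  B(2) = 4 and B(7) = 46, so N(2) = 40 and N(7) = 18739; but 7 - 2 does not divide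
  18739 - 40, whereas a - b divides f(a) - f(b) for every integer polynomial f.\<close>

definition nat_residue_ring :: "nat \<Rightarrow> nat ring" where
  "nat_residue_ring p = \<lparr>carrier = {..<p}, monoid.mult = (\<lambda>a b. a * b mod p), one = 1,
     zero = 0, add = (\<lambda>a b. (a + b) mod p)\<rparr>"

lemma nat_residue_ring_simps [simp]:
  "carrier (nat_residue_ring p) = {..<p}"
  "a \<otimes>\<^bsub>nat_residue_ring p\<^esub> b = a * b mod p"
  "a \<oplus>\<^bsub>nat_residue_ring p\<^esub> b = (a + b) mod p"
  "\<one>\<^bsub>nat_residue_ring p\<^esub> = 1"
  "\<zero>\<^bsub>nat_residue_ring p\<^esub> = 0"
  by (simp_all add: nat_residue_ring_def)

lemma cring_nat_residue_ring:
  assumes "p > 1"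
  shows "cring (nat_residue_ring p)"
proof (rule cringI)
  show "abelian_group (nat_residue_ring p)"
  proof (rule abelian_groupI)
    fix x assume x: "x \<in> carrier (nat_residue_ring p)"
    show "\<exists>y\<in>carrier (nat_residue_ring p). y \<oplus>\<^bsub>nat_residue_ring p\<^esub> x = \<zero>\<^bsub>nat_residue_ring p\<^esub>"
    proof (cases "x = 0")
      case True
      then show ?thesis using assms by (intro bexI[of _ 0]) auto
    next
      case False
      then show ?thesis using x by (intro bexI[of _ "p - x"]) auto
    qed
  qed (use assms in \<open>auto simp: mod_add_eq add_ac mod_add_right_eq mod_add_left_eq\<close>)
  show "comm_monoid (nat_residue_ring p)"
    by (rule comm_monoidI) (use assms in \<open>auto simp: mod_mult_left_eq mod_mult_right_eq mult_ac\<close>)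
  fix x y z
  show "(x \<oplus>\<^bsub>nat_residue_ring p\<^esub> y) \<otimes>\<^bsub>nat_residue_ring p\<^esub> z =
      x \<otimes>\<^bsub>nat_residue_ring p\<^esub> z \<oplus>\<^bsub>nat_residue_ring p\<^esub> y \<otimes>\<^bsub>nat_residue_ring p\<^esub> z"
    by (simp add: mod_mult_left_eq mod_add_eq distrib_right)
qed

lemma field_nat_residue_ring:
  assumes "prime p"
  shows "field (nat_residue_ring p)"
proof -
  have p: "p > 1" using assms prime_gt_1_nat by blast
  interpret cring "nat_residue_ring p" using cring_nat_residue_ring[OF p] .
  show ?thesis
  proof (rule cring_fieldI2)
    fix a assume a: "a \<in> carrier (nat_residue_ring p)" "a \<noteq> \<zero>\<^bsub>nat_residue_ring p\<^esub>"
    then have "coprime p a"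
      using assms by (auto intro: prime_imp_coprime dest: nat_dvd_not_less)
    then obtain b where "[a * b = 1] (mod p)"
      using cong_solve_coprime_nat by (auto simp: coprime_commute)
    then have "a * (b mod p) mod p = 1"
      using p by (simp add: cong_def mod_mult_right_eq)
    then show "\<exists>b\<in>carrier (nat_residue_ring p). a \<otimes>\<^bsub>nat_residue_ring p\<^esub> b = \<one>\<^bsub>nat_residue_ring p\<^esub>"
      using p by (intro bexI[of _ "b mod p"]) auto
  qed simp
qed

locale finite_field = field + assumes finite_carrier: "finite (carrier R)"

lemma finite_field_nat_residue_ring: "prime p \<Longrightarrow> finite_field (nat_residue_ring p)"
  by (simp add: finite_field_def finite_field_axioms_def field_nat_residue_ring)

lemma (in field) add_mult_eq_zero_iff:
  assumes "y \<in> carrier R" "x \<in> carrier R" "c \<in> carrier R" "c \<noteq> \<zero>"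
  shows "y \<oplus> c \<otimes> x = \<zero> \<longleftrightarrow> x = \<ominus> (inv c \<otimes> y)"
proof -
  have c: "inv c \<in> carrier R" "inv c \<otimes> c = \<one>" "c \<otimes> inv c = \<one>"
    using assms field_Units by auto
  show ?thesis
  proof
    assume "y \<oplus> c \<otimes> x = \<zero>"
    then have "\<ominus> y = c \<otimes> x"
      using assms by (intro minus_equality) (simp_all add: a_comm)
    then have "inv c \<otimes> \<ominus> y = x"
      using assms c by (simp add: m_assoc[symmetric])
    then show "x = \<ominus> (inv c \<otimes> y)"
      using assms c by (simp add: r_minus)
  next
    assume "x = \<ominus> (inv c \<otimes> y)"
    then have "c \<otimes> x = \<ominus> y"
      using assms c by (simp add: r_minus m_assoc[symmetric])
    then show "y \<oplus> c \<otimes> x = \<zero>"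
      using assms by (simp add: r_neg)
  qed
qed

lemma (in monoid) nat_pow_3_eq_cube: "x \<in> carrier G \<Longrightarrow> x [^] (3::nat) = x \<otimes> x \<otimes> x"
  by (simp add: numeral_3_eq_3)

context finite_field
begin

definition cubic_fibre :: "'a \<Rightarrow> 'a \<Rightarrow> ('a \<times> 'a \<times> 'a) set" where
  "cubic_fibre s c = {(x1, x2, x3). x1 \<in> carrier R \<and> x2 \<in> carrier R \<and> x3 \<in> carrier R \<and>
     x1 [^] (3::nat) \<oplus> s \<otimes> x2 \<otimes> x1 \<oplus> c \<otimes> x3 = \<zero>}"

lemma card_cubic_fibre_unit:
  assumes "s \<in> carrier R" "c \<in> carrier R" "c \<noteq> \<zero>"
  shows "card (cubic_fibre s c) = card (carrier R) ^ 2"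
proof -
  define solve :: "'a \<times> 'a \<Rightarrow> 'a \<times> 'a \<times> 'a" where
    "solve = (\<lambda>(x1, x2). (x1, x2, \<ominus> (inv c \<otimes> (x1 [^] (3::nat) \<oplus> s \<otimes> x2 \<otimes> x1))))"
  have "inv c \<in> carrier R" using assms field_Units by auto
  then have "cubic_fibre s c = solve ` (carrier R \<times> carrier R)"
    using add_mult_eq_zero_iff[of "_ [^] (3::nat) \<oplus> s \<otimes> _ \<otimes> _" _ c] assms
    by (fastforce simp: cubic_fibre_def solve_def)
  moreover have "inj_on solve (carrier R \<times> carrier R)"
    by (auto simp: inj_on_def solve_def)
  ultimately show ?thesis
    by (simp add: card_image card_cartesian_product power2_eq_square)
qed

lemma card_cubic_fibre_zero:
  "card (cubic_fibre \<zero> \<zero>) = card (carrier R) ^ 2"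
proof -
  have "cubic_fibre \<zero> \<zero> = {\<zero>} \<times> carrier R \<times> carrier R"
    by (auto simp: cubic_fibre_def nat_pow_3_eq_cube integral_iff)
  then show ?thesis
    by (simp add: card_cartesian_product power2_eq_square)
qed

lemma card_cubic_fibre_reducible:
  assumes "s \<in> carrier R" "s \<noteq> \<zero>"
  shows "card (cubic_fibre s \<zero>) = card (carrier R) ^ 2 + (card (carrier R) - 1) * card (carrier R)"
proof -
  define solve :: "'a \<times> 'a \<Rightarrow> 'a \<times> 'a \<times> 'a" where
    "solve = (\<lambda>(x1, x3). (x1, \<ominus> (inv s \<otimes> (x1 \<otimes> x1)), x3))"
  have factor: "x1 [^] (3::nat) \<oplus> s \<otimes> x2 \<otimes> x1 \<oplus> \<zero> \<otimes> x3 = x1 \<otimes> (x1 \<otimes> x1 \<oplus> s \<otimes> x2)"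
    if "x1 \<in> carrier R" "x2 \<in> carrier R" "x3 \<in> carrier R" for x1 x2 x3
    using that assms by (simp add: nat_pow_3_eq_cube) algebra
  have "inv s \<in> carrier R" using assms field_Units by auto
  then have "cubic_fibre s \<zero> = ({\<zero>} \<times> carrier R \<times> carrier R) \<union> solve ` ((carrier R - {\<zero>}) \<times> carrier R)"
    using factor add_mult_eq_zero_iff[of "_ \<otimes> _" _ s] assms
    by (auto simp: cubic_fibre_def solve_def integral_iff nat_pow_3_eq_cube)
  moreover have "inj_on solve ((carrier R - {\<zero>}) \<times> carrier R)"
    by (auto simp: inj_on_def solve_def)
  moreover have "({\<zero>} \<times> carrier R \<times> carrier R) \<inter> solve ` ((carrier R - {\<zero>}) \<times> carrier R) = {}"
    by (auto simp: solve_def)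
  ultimately show ?thesis
    using finite_carrier
    by (simp add: card_Un_disjoint card_image card_cartesian_product power2_eq_square)
qed

definition coeff_x1x2 :: "'a \<times> 'a \<times> 'a \<Rightarrow> 'a" where
  "coeff_x1x2 = (\<lambda>(t1, t2, t3). t1 \<oplus> t2 \<oplus> t3)"

definition coeff_x3 :: "'a \<times> 'a \<times> 'a \<Rightarrow> 'a" where
  "coeff_x3 = (\<lambda>(t1, t2, t3). t1 \<otimes> t2 \<oplus> t2 \<otimes> t3 \<oplus> t1 \<otimes> t3 \<oplus> t1 \<otimes> t2 \<otimes> t3)"

definition reducible_params :: "('a \<times> 'a \<times> 'a) set" where
  "reducible_params =
     {t \<in> carrier R \<times> carrier R \<times> carrier R. coeff_x3 t = \<zero> \<and> coeff_x1x2 t \<noteq> \<zero>}"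

lemma card_cubic_fibre:
  assumes "t \<in> carrier R \<times> carrier R \<times> carrier R"
  shows "card (cubic_fibre (coeff_x1x2 t) (coeff_x3 t)) = card (carrier R) ^ 2 +
     (if t \<in> reducible_params then (card (carrier R) - 1) * card (carrier R) else 0)"
proof -
  have coeffs: "coeff_x1x2 t \<in> carrier R" "coeff_x3 t \<in> carrier R"
    using assms by (auto simp: coeff_x1x2_def coeff_x3_def)
  consider "coeff_x3 t \<noteq> \<zero>" | "coeff_x3 t = \<zero>" "coeff_x1x2 t = \<zero>"
    | "coeff_x3 t = \<zero>" "coeff_x1x2 t \<noteq> \<zero>"
    by blast
  then show ?thesis
  proof cases
    case 1
    then show ?thesis using coeffs card_cubic_fibre_unit by (simp add: reducible_params_def)
  next
    case 2
    then show ?thesis using card_cubic_fibre_zero by (simp add: reducible_params_def)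
  next
    case 3
    then show ?thesis
      using assms coeffs card_cubic_fibre_reducible by (simp add: reducible_params_def)
  qed
qed

lemma V_triangle_points_eq:
  "V_triangle_points R = card (carrier R) ^ 5 +
     card reducible_params * ((card (carrier R) - 1) * card (carrier R))"
proof -
  let ?q = "card (carrier R)"
  let ?T = "carrier R \<times> carrier R \<times> carrier R"
  let ?fibre = "\<lambda>t. cubic_fibre (coeff_x1x2 t) (coeff_x3 t)"
  define swap :: "('a \<times> 'a \<times> 'a) \<times> 'a \<times> 'a \<times> 'a \<Rightarrow> 'a \<times> 'a \<times> 'a \<times> 'a \<times> 'a \<times> 'a"
    where "swap = (\<lambda>((t1, t2, t3), (x1, x2, x3)). (x1, x2, x3, t1, t2, t3))"
  have "{(x1, x2, x3, t1, t2, t3).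
      x1 \<in> carrier R \<and> x2 \<in> carrier R \<and> x3 \<in> carrier R \<and>
      t1 \<in> carrier R \<and> t2 \<in> carrier R \<and> t3 \<in> carrier R \<and>
      V_triangle R x1 x2 x3 t1 t2 t3 = \<zero>} = swap ` Sigma ?T ?fibre"
    by (auto simp: V_triangle_def cubic_fibre_def coeff_x1x2_def coeff_x3_def swap_def image_iff)
  moreover have "inj_on swap (Sigma ?T ?fibre)"
    by (auto simp: inj_on_def swap_def)
  moreover have "finite (?fibre t)" for t
    by (rule finite_subset[of _ ?T]) (auto simp: cubic_fibre_def finite_carrier)
  ultimately have "V_triangle_points R = (\<Sum>t\<in>?T. card (?fibre t))"
    unfolding V_triangle_points_def using finite_carrier by (simp add: card_image)
  also have "\<dots> = (\<Sum>t\<in>?T. ?q ^ 2 + (if t \<in> reducible_params then (?q - 1) * ?q else 0))"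
    by (rule sum.cong) (simp_all add: card_cubic_fibre)
  also have "\<dots> = ?q ^ 2 * card ?T + card (?T \<inter> reducible_params) * ((?q - 1) * ?q)"
    using finite_carrier by (simp add: sum.distrib sum.If_cases)
  also have "?T \<inter> reducible_params = reducible_params"
    by (auto simp: reducible_params_def)
  finally show ?thesis
    by (simp add: card_cartesian_product eval_nat_numeral)
qed

end

definition reducible_residue_triples :: "nat \<Rightarrow> (nat \<times> nat \<times> nat) set" where
  "reducible_residue_triples p =
     Set.filter (\<lambda>(t1, t2, t3). (t1 * t2 + t2 * t3 + t1 * t3 + t1 * t2 * t3) mod p = 0 \<and>
       (t1 + t2 + t3) mod p \<noteq> 0) ({..<p} \<times> {..<p} \<times> {..<p})"

lemma reducible_params_nat_residue_ring:
  assumes "prime p"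
  shows "finite_field.reducible_params (nat_residue_ring p) = reducible_residue_triples p"
  using finite_field_nat_residue_ring[OF assms]
  by (auto simp: finite_field.reducible_params_def finite_field.coeff_x1x2_def
      finite_field.coeff_x3_def reducible_residue_triples_def mod_simps)

lemma V_triangle_points_nat_residue_ring:
  assumes "prime p"
  shows "V_triangle_points (nat_residue_ring p) =
    p ^ 5 + card (reducible_residue_triples p) * ((p - 1) * p)"
  using finite_field.V_triangle_points_eq[OF finite_field_nat_residue_ring[OF assms]]
  by (simp add: reducible_params_nat_residue_ring[OF assms])

lemma card_reducible_residue_triples:
  "card (reducible_residue_triples 2) = 4"
  "card (reducible_residue_triples 7) = 46"
  by code_simp+

lemma sub_dvd_poly_sub: "x - y dvd poly p x - poly p (y :: 'a :: comm_ring_1)"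
proof -
  have "[:- y, 1:] dvd p - [:poly p y:]"
    by (simp add: poly_eq_0_iff_dvd[symmetric])
  then obtain g where g: "p - [:poly p y:] = [:- y, 1:] * g" ..
  have "poly (p - [:poly p y:]) x = (x - y) * poly g x"
    by (simp add: g algebra_simps)
  then show ?thesis by simp
qed

theorem theorem3p2:
  shows "\<not> V_triangle_polynomially_countable"
proof
  assume "V_triangle_polynomially_countable"
  then obtain f :: "int poly" where f: "\<And>R :: nat ring. field R \<and> finite (carrier R) \<Longrightarrow>
      int (V_triangle_points R) = poly f (int (card (carrier R)))"
    unfolding V_triangle_polynomially_countable_def by blast
  have "poly f 2 = 40" "poly f 7 = 18739"
    using f[of "nat_residue_ring 2"] f[of "nat_residue_ring 7"]
      field_nat_residue_ring[of 2] field_nat_residue_ring[of 7]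
      V_triangle_points_nat_residue_ring[of 2] V_triangle_points_nat_residue_ring[of 7]
      card_reducible_residue_triples
    by simp_all
  moreover have "7 - 2 dvd poly f 7 - poly f 2"
    by (rule sub_dvd_poly_sub)
  ultimately show False
    by simp
qed

end
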